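(* Let $u,v\in L^\infty(\mathbb{T})$ be nonnegative, $M:=\max\{\|u\|_{L^\infty},\|v\|_{L^\infty}\}$, $m_\infty:=\frac12\int_{\mathbb{T}}(u+v)dx>0$. There is $\varepsilon_0>0$ depending only on $M$ (namely $\varepsilon_0=1/(4MC_R)$, with $C_R$ the elliptic regularity constant below) such that for every $\varepsilon\in(0,\varepsilon_0)$ there exist positive constants $C_1,C_2$ depending only on $m_\infty,M,\varepsilon$ with $$\frac1{C_2}\int_{\mathbb{T}}\big((u-m_\infty)^2+(v-m_\infty)^2\big)dx\le\mathrm{E}[u,v]\le\frac1{C_1}\int_{\mathbb{T}}\big((u-m_\infty)^2+(v-m_\infty)^2\big)dx.$$
   Context: $\mathbb{T}=\mathbb{R}/\mathbb{Z}$ (measure $1$). $\rho:=u+v$, $j:=u-v$. $\phi$ is the unique solution (with zero mean, say) of $-\partial_{xx}\phi=\rho-2m_\infty$ on $\mathbb{T}$; it satisfies $\|\phi\|_{H^2(\mathbb{T})}\le C_R\|\rho-2m_\infty\|_{L^2(\mathbb{T})}$ for a universal constant $C_R>0$. $\mathrm{H}[u,v]:=\int_{\mathbb{T}}\big(\tfrac{u}{m_\infty}\log\tfrac{u}{m_\infty}-\tfrac{u}{m_\infty}+1\big)m_\infty dx+\int_{\mathbb{T}}\big(\tfrac{v}{m_\infty}\log\tfrac{v}{m_\infty}-\tfrac{v}{m_\infty}+1\big)m_\infty dx$ with $0\log0=0$, and $\mathrm{E}[u,v]:=\mathrm{H}[u,v]+\varepsilon\int_{\mathbb{T}}j\,\partial_x\phi\,dx$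 for a parameter $\varepsilon>0$. *)

theory Defs
  imports "HOL-Analysis.Analysis" "HOL-Probability.Essential_Supremum"
begin

(* Functions on the torus T = R/Z are modelled as 1-periodic functions real => real;
   integrals over T are integrals over [0,1]. *)

definition periodic1 :: "(real \<Rightarrow> real) \<Rightarrow> bool" where
  "periodic1 f \<longleftrightarrow> (\<forall>x. f (x + 1) = f x)"

(* phi is differentiable everywhere and its derivative is absolutely continuous with
   (weak) derivative chi, i.e. chi is the weak second derivative of phi *)
definition weak_second_deriv :: "(real \<Rightarrow> real) \<Rightarrow> (real \<Rightarrow> real) \<Rightarrow> bool" where
  "weak_second_deriv phi chi \<longleftrightarrow>
     (\<forall>x. phi differentiable (at x)) \<and>
     (\<forall>a b. a \<le> b \<longrightarrow> chi integrable_on {a..b} \<and>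
              deriv phi b - deriv phi a = integral {a..b} chi)"

definition poisson_sol :: "(real \<Rightarrow> real) \<Rightarrow> (real \<Rightarrow> real) \<Rightarrow> bool" where
  "poisson_sol f phi \<longleftrightarrow> periodic1 phi \<and> weak_second_deriv phi (\<lambda>x. - f x) \<and>
     integral {0..1} phi = 0"

definition L2_norm_T :: "(real \<Rightarrow> real) \<Rightarrow> real" where
  "L2_norm_T f = sqrt (integral {0..1} (\<lambda>x. (f x)\<^sup>2))"

definition H2_norm_T :: "(real \<Rightarrow> real) \<Rightarrow> (real \<Rightarrow> real) \<Rightarrow> real" where
  "H2_norm_T phi chi = sqrt (integral {0..1} (\<lambda>x. (phi x)\<^sup>2)
       + integral {0..1} (\<lambda>x. (deriv phi x)\<^sup>2) + integral {0..1} (\<lambda>x. (chi x)\<^sup>2))"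

definition elliptic_const :: "real \<Rightarrow> bool" where
  "elliptic_const CR \<longleftrightarrow> CR > 0 \<and>
     (\<forall>f phi. periodic1 f \<and> f \<in> borel_measurable lborel \<and> f integrable_on {0..1} \<and>
        (\<lambda>x. (f x)\<^sup>2) integrable_on {0..1} \<and> integral {0..1} f = 0 \<and> poisson_sol f phi
        \<longrightarrow> H2_norm_T phi (\<lambda>x. - f x) \<le> CR * L2_norm_T f)"

definition Linf_nonneg :: "(real \<Rightarrow> real) \<Rightarrow> bool" where
  "Linf_nonneg u \<longleftrightarrow> periodic1 u \<and> u \<in> borel_measurable lborel \<and> (\<forall>x. 0 \<le> u x) \<and>
     esssup (lebesgue_on {0..1}) (\<lambda>x. ereal (u x)) < \<infinity>"

definition Linf_norm_T :: "(real \<Rightarrow> real) \<Rightarrow> ereal" where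
  "Linf_norm_T u = esssup (lebesgue_on {0..1}) (\<lambda>x. ereal \<bar>u x\<bar>)"

definition pot :: "real \<Rightarrow> (real \<Rightarrow> real) \<Rightarrow> (real \<Rightarrow> real) \<Rightarrow> (real \<Rightarrow> real)" where
  "pot m u v = (THE phi. poisson_sol (\<lambda>x. u x + v x - 2 * m) phi)"

definition ent :: "real \<Rightarrow> real \<Rightarrow> real" where
  "ent m s = (let r = s / m in ((if r = 0 then 0 else r * ln r) - r + 1) * m)"

definition H_T :: "real \<Rightarrow> (real \<Rightarrow> real) \<Rightarrow> (real \<Rightarrow> real) \<Rightarrow> real" where
  "H_T m u v = integral {0..1} (\<lambda>x. ent m (u x)) + integral {0..1} (\<lambda>x. ent m (v x))"

definition E_T :: "real \<Rightarrow> real \<Rightarrow> (real \<Rightarrow> real) \<Rightarrow> (real \<Rightarrow> real) \<Rightarrow> real" where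
  "E_T eps m u v = H_T m u v +
     eps * integral {0..1} (\<lambda>x. (u x - v x) * deriv (pot m u v) x)"

end

theory Submission
  imports Defs
begin

(*
  The entropy density h(r) = r log r - r + 1 is squeezed between quadratics,
  (r - 1)^2 / (2K) <= h(r) <= (r - 1)^2 for 0 <= r <= K with K >= 1: the upper bound is
  log r <= r - 1, the lower one follows from h(1) = h'(1) = 0 and h''(r) = 1/r >= 1/K.
  With r = u/m and K = M/m this gives D/(2M) <= H[u,v] <= D/m, where
  D = int (u - m)^2 + (v - m)^2 (note m <= M, as m is a mean of u and v).

  For the coupling term, -phi'' = rho - 2m, elliptic regularity bounds int phi'^2 by
  C_R^2 int (rho - 2m)^2, so weighted AM-GM gives
    |int j phi'| <= C_R/2 int j^2 + 1/(2 C_R) int phi'^2 <= C_R/2 int (j^2 + (rho - 2m)^2) = C_R D,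
  using j^2 + (rho - 2m)^2 = 2((u - m)^2 + (v - m)^2).  Hence
  (1/(2M) - eps C_R) D <= E[u,v] <= (1/m + eps C_R) D, and the lower factor is positive for
  eps < 1/(4 M C_R).

  Since phi is defined by a definite description, one also needs that the Poisson problem has
  exactly one zero-mean periodic solution: integrating a mean-zero datum twice, adjusting the
  mean after each step, yields a periodic solution, and the difference of two solutions is
  affine, hence constant by periodicity and zero by the mean condition.
*)

section \<open>The entropy density\<close>

definition entropy_density :: "real \<Rightarrow> real" where
  "entropy_density r = (if r = 0 then 0 else r * ln r) - r + 1"

lemma ent_eq_entropy_density: "0 < m \<Longrightarrow> ent m s = m * entropy_density (s / m)"
  by (simp add: ent_def entropy_density_def Let_def)

lemma entropy_density_le_square:
  fixes r :: real
  assumes "0 \<le> r"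
  shows "entropy_density r \<le> (r - 1)\<^sup>2"
proof (cases "r = 0")
  case False
  with assms have "r * ln r \<le> r * (r - 1)"
    by (intro mult_left_mono ln_le_minus_one) auto
  with False show ?thesis
    by (simp add: entropy_density_def power2_eq_square algebra_simps)
qed (simp add: entropy_density_def)

lemma square_le_entropy_density:
  fixes r K :: real
  assumes r: "0 \<le> r" "r \<le> K" and K: "1 \<le> K"
  shows "(r - 1)\<^sup>2 / (2 * K) \<le> entropy_density r"
proof (cases "r = 0")
  case True
  with K show ?thesis by (simp add: entropy_density_def field_simps)
next
  case False
  with r have r_pos: "0 < r" by simp
  define g where "g t = t * ln t - t + 1 - (t - 1)\<^sup>2 / (2 * K)" for t :: real
  have g_deriv: "(g has_real_derivative ln t - (t - 1) / K) (at t)" if "0 < t" for t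
    unfolding g_def using that K
    by (auto intro!: derivative_eq_intros simp: field_simps power2_eq_square)
  have "g 1 \<le> g r"
  proof (cases "r \<le> 1")
    case True
    show ?thesis
    proof (rule DERIV_nonpos_imp_nonincreasing[OF True])
      fix t assume t: "r \<le> t" "t \<le> 1"
      with r_pos have "ln t \<le> t - 1" by (intro ln_le_minus_one) simp
      also have "t - 1 \<le> (t - 1) / K"
        using t K mult_left_mono_neg[of 1 K "t - 1"] by (simp add: le_divide_eq)
      finally show "\<exists>y. (g has_real_derivative y) (at t) \<and> y \<le> 0"
        using g_deriv r_pos t by (intro exI[of _ "ln t - (t - 1) / K"]) auto
    qed
  next
    case False
    then have "1 \<le> r" by simp
    then show ?thesis
    proof (rule DERIV_nonneg_imp_nondecreasing)
      fix t assume t: "1 \<le> t" "t \<le> r"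
      have "(t - 1) / K \<le> (t - 1) / t"
        using t r by (intro divide_left_mono) auto
      also have "\<dots> \<le> ln t"
        using ln_diff_le[of 1 t] t by (simp add: field_simps)
      finally show "\<exists>y. (g has_real_derivative y) (at t) \<and> 0 \<le> y"
        using g_deriv t by (intro exI[of _ "ln t - (t - 1) / K"]) auto
    qed
  qed
  with False show ?thesis by (simp add: g_def entropy_density_def)
qed

lemma entropy_density_nonneg:
  assumes "0 \<le> r"
  shows "0 \<le> entropy_density r"
proof -
  have "0 \<le> (r - 1)\<^sup>2 / (2 * max r 1)"
    by simp
  also have "\<dots> \<le> entropy_density r"
    using assms by (intro square_le_entropy_density) auto
  finally show ?thesis .
qed

lemma ent_le_square:
  assumes "0 < m" "0 \<le> s"
  shows "ent m s \<le> (s - m)\<^sup>2 / m"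
proof -
  have "ent m s \<le> m * (s / m - 1)\<^sup>2"
    using entropy_density_le_square[of "s / m"] assms
    by (simp add: ent_eq_entropy_density mult_left_mono)
  also have "\<dots> = (s - m)\<^sup>2 / m"
    using assms by (simp add: field_simps power2_eq_square)
  finally show ?thesis .
qed

lemma square_le_ent:
  assumes "0 < m" "m \<le> M" "0 \<le> s" "s \<le> M"
  shows "(s - m)\<^sup>2 / (2 * M) \<le> ent m s"
proof -
  have "(s - m)\<^sup>2 / (2 * M) = m * ((s / m - 1)\<^sup>2 / (2 * (M / m)))"
    using assms by (simp add: field_simps power2_eq_square)
  also have "\<dots> \<le> ent m s"
    unfolding ent_eq_entropy_density[OF assms(1)] using assms
    by (intro mult_left_mono square_le_entropy_density) (auto simp: field_simps)
  finally show ?thesis .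
qed

lemma ent_nonneg: "0 < m \<Longrightarrow> 0 \<le> s \<Longrightarrow> 0 \<le> ent m s"
  by (simp add: ent_eq_entropy_density entropy_density_nonneg)

section \<open>The Poisson equation on the torus\<close>

lemma periodic1_shift_nat: "periodic1 f \<Longrightarrow> f (x + real n) = f x"
proof (induction n arbitrary: x)
  case (Suc n)
  then have "f (x + real n + 1) = f x"
    by (simp add: periodic1_def)
  then show ?case by (simp add: ac_simps)
qed simp

lemma periodic1_shift_int:
  assumes "periodic1 f"
  shows "f (x + of_int k) = f x"
proof (cases "0 \<le> k")
  case True
  then show ?thesis
    using periodic1_shift_nat[OF assms, of x "nat k"] by simp
next
  case False
  then show ?thesis
    using periodic1_shift_nat[OF assms, of "x + of_int k" "nat (- k)"] by simp
qed

lemma periodic1_integrable_on_Icc: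
  assumes per: "periodic1 g" and int: "g integrable_on {0..1}"
  shows "g integrable_on {a..b}"
proof -
  have unit: "g integrable_on {of_int k..of_int k + 1}" for k
    using integrable_shift_real_ivl[OF int, of "- of_int k"] periodic1_shift_int[OF per, of _ "- k"]
    by (simp add: add.commute)
  have cells: "g integrable_on {of_int k..of_int k + real n}" for k n
  proof (induction n)
    case (Suc n)
    have "g integrable_on {of_int k + real n..of_int k + real (Suc n)}"
      using unit[of "k + int n"] by (simp add: ac_simps)
    with Suc show ?case
      by (rule Henstock_Kurzweil_Integration.integrable_combine[rotated 2]) auto
  qed (use integrable_on_refl[of g "of_int k"] in simp)
  have "b \<le> of_int \<lfloor>a\<rfloor> + real (nat (\<lceil>b\<rceil> - \<lfloor>a\<rfloor>))"
    by (cases "\<lfloor>a\<rfloor> \<le> \<lceil>b\<rceil>") (auto, linarith)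
  then have "{a..b} \<subseteq> {of_int \<lfloor>a\<rfloor>..of_int \<lfloor>a\<rfloor> + real (nat (\<lceil>b\<rceil> - \<lfloor>a\<rfloor>))}"
    using of_int_floor_le[of a] by auto
  with cells show ?thesis
    by (rule integrable_on_subinterval)
qed

lemma periodic1_integral_unit_interval:
  assumes per: "periodic1 g" and int: "g integrable_on {0..1}"
  shows "integral {x..x + 1} g = integral {0..1} g"
proof -
  define t where "t = x - of_int \<lfloor>x\<rfloor>"
  have t: "0 \<le> t" "t \<le> 1" unfolding t_def by linarith+
  have "integral {x..x + 1} g = integral {t..t + 1} g"
    using integral_shift_real_ivl[of x "of_int \<lfloor>x\<rfloor>" "x + 1" g] periodic1_shift_int[OF per]
    by (simp add: t_def algebra_simps)
  also have "\<dots> = integral {t..1} g + integral {1..t + 1} g"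
    using t by (intro Henstock_Kurzweil_Integration.integral_combine[symmetric]
        periodic1_integrable_on_Icc[OF per int]) auto
  also have "integral {1..t + 1} g = integral {0..t} g"
    using integral_shift_real_ivl[of 1 1 "t + 1" g] per by (simp add: periodic1_def)
  also have "integral {t..1} g + integral {0..t} g = integral {0..1} g"
    using Henstock_Kurzweil_Integration.integral_combine[OF t int] by simp
  finally show ?thesis .
qed

definition primitive :: "(real \<Rightarrow> real) \<Rightarrow> real \<Rightarrow> real" where
  "primitive h x = (if 0 \<le> x then integral {0..x} h else - integral {x..0} h)"

lemma primitive_diff:
  assumes "\<And>a b. h integrable_on {a..b}" "a \<le> b"
  shows "primitive h b - primitive h a = integral {a..b} h"
proof -
  consider "0 \<le> a" | "a < 0" "0 \<le> b" | "b < 0"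
    by linarith
  then show ?thesis
  proof cases
    case 1
    then show ?thesis
      using Henstock_Kurzweil_Integration.integral_combine[of 0 a b h] assms by (simp add: primitive_def)
  next
    case 2
    then show ?thesis
      using Henstock_Kurzweil_Integration.integral_combine[of a 0 b h] assms by (simp add: primitive_def)
  next
    case 3
    then show ?thesis
      using Henstock_Kurzweil_Integration.integral_combine[of a b 0 h] assms by (simp add: primitive_def)
  qed
qed

lemma continuous_primitive:
  assumes int: "\<And>a b. h integrable_on {a..b}"
  shows "continuous_on S (primitive h)"
proof -
  have "continuous_on {x - 1..x + 1} (primitive h)" for x
  proof (rule continuous_on_eq)
    show "continuous_on {x - 1..x + 1} (\<lambda>y. primitive h (x - 1) + integral {x - 1..y} h)"
      by (intro continuous_intros indefinite_integral_continuous_1 int)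
    show "primitive h (x - 1) + integral {x - 1..y} h = primitive h y" if "y \<in> {x - 1..x + 1}" for y
      using primitive_diff[OF int, of "x - 1" y] that by simp
  qed
  then have "isCont (primitive h) x" for x
    by (rule continuous_on_interior[of "{x - 1..x + 1}"]) auto
  then show ?thesis
    by (simp add: continuous_at_imp_continuous_on)
qed

lemma has_real_derivative_primitive:
  assumes cont: "continuous_on UNIV h"
  shows "(primitive h has_real_derivative h x) (at x)"
proof -
  have cont_Icc: "continuous_on {a..b} h" for a b
    using continuous_on_subset[OF cont subset_UNIV] .
  have int: "h integrable_on {a..b}" for a b
    by (rule integrable_continuous_real[OF cont_Icc])
  have "((\<lambda>y. integral {x - 1..y} h) has_vector_derivative h x) (at x within {x - 1..x + 1})"
    by (intro integral_has_vector_derivative cont_Icc) auto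
  moreover have "x \<in> interior {x - 1..x + 1}"
    by simp
  ultimately have "((\<lambda>y. integral {x - 1..y} h) has_real_derivative h x) (at x)"
    unfolding has_real_derivative_iff_has_vector_derivative using at_within_interior by metis
  then have "((\<lambda>y. primitive h (x - 1) + integral {x - 1..y} h) has_real_derivative h x) (at x)"
    using DERIV_add[OF DERIV_const] by simp
  then show ?thesis
  proof (rule has_field_derivative_transform_within_open[where S = "{x - 1<..<x + 1}"])
    show "primitive h (x - 1) + integral {x - 1..y} h = primitive h y" if "y \<in> {x - 1<..<x + 1}" for y
      using primitive_diff[OF int, of "x - 1" y] that by simp
  qed auto
qed

lemma periodic1_primitive:
  assumes per: "periodic1 h" and int: "h integrable_on {0..1}" and mean: "integral {0..1} h = 0"
  shows "periodic1 (primitive h)"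
  unfolding periodic1_def
proof
  fix x
  have "primitive h (x + 1) - primitive h x = integral {x..x + 1} h"
    by (intro primitive_diff periodic1_integrable_on_Icc[OF per int]) simp
  with periodic1_integral_unit_interval[OF per int] mean
  show "primitive h (x + 1) = primitive h x" by simp
qed

lemma integral_subtract_mean:
  fixes f :: "real \<Rightarrow> real"
  assumes "f integrable_on {0..1}"
  shows "integral {0..1} (\<lambda>x. f x - integral {0..1} f) = 0"
  using Henstock_Kurzweil_Integration.integral_diff[OF assms integrable_const_ivl] by simp

lemma poisson_sol_exists:
  assumes per: "periodic1 f" and int: "f integrable_on {0..1}" and mean: "integral {0..1} f = 0"
  shows "\<exists>phi. poisson_sol f phi"
proof -
  define g where "g = (\<lambda>x. - f x)"
  have g_per: "periodic1 g" and g_int: "g integrable_on {0..1}" and g_mean: "integral {0..1} g = 0"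
    using per int mean by (auto simp: g_def periodic1_def intro: integrable_neg)
  have g_int_Icc: "g integrable_on {a..b}" for a b
    by (rule periodic1_integrable_on_Icc[OF g_per g_int])
  \<comment> \<open>\<open>P\<close>, the future \<open>phi'\<close>, is normalised to mean zero so that its primitive is periodic.\<close>
  define P where "P x = primitive g x - integral {0..1} (primitive g)" for x
  have P_cont: "continuous_on S P" for S
    unfolding P_def by (intro continuous_intros continuous_primitive g_int_Icc)
  have P_per: "periodic1 P"
    using periodic1_primitive[OF g_per g_int g_mean] by (simp add: P_def periodic1_def)
  have P_mean: "integral {0..1} P = 0"
    unfolding P_def by (intro integral_subtract_mean integrable_continuous_real continuous_primitive g_int_Icc)
  define phi where "phi x = primitive P x - integral {0..1} (primitive P)" for x
  have phi_deriv: "(phi has_real_derivative P x) (at x)" for x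
    unfolding phi_def using has_real_derivative_primitive[OF P_cont] by (auto intro!: derivative_eq_intros)
  have "periodic1 phi"
    using periodic1_primitive[OF P_per integrable_continuous_real[OF P_cont] P_mean]
    by (simp add: phi_def periodic1_def)
  moreover have "weak_second_deriv phi g"
    unfolding weak_second_deriv_def
  proof (intro conjI allI impI)
    show "phi differentiable (at x)" for x
      using phi_deriv real_differentiable_def by blast
    fix a b :: real assume "a \<le> b"
    then show "g integrable_on {a..b}" "deriv phi b - deriv phi a = integral {a..b} g"
      using primitive_diff[OF g_int_Icc] g_int_Icc by (simp_all add: DERIV_imp_deriv[OF phi_deriv] P_def)
  qed
  moreover have "integral {0..1} phi = 0"
    unfolding phi_def using P_cont
    by (intro integral_subtract_mean integrable_continuous_real continuous_primitive)
  ultimately show ?thesis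
    unfolding poisson_sol_def g_def by blast
qed

lemma has_real_derivative_weak_second_deriv:
  "weak_second_deriv phi chi \<Longrightarrow> (phi has_real_derivative deriv phi x) (at x)"
  unfolding weak_second_deriv_def by (simp add: DERIV_deriv_iff_real_differentiable)

lemma continuous_on_deriv_weak_second_deriv:
  assumes "weak_second_deriv phi chi"
  shows "continuous_on {a..b} (deriv phi)"
proof (rule continuous_on_eq)
  have "chi integrable_on {a..b}"
    using assms by (cases "a \<le> b") (auto simp: weak_second_deriv_def integrable_on_empty)
  then show "continuous_on {a..b} (\<lambda>x. deriv phi a + integral {a..x} chi)"
    by (intro continuous_intros indefinite_integral_continuous_1)
  show "deriv phi a + integral {a..x} chi = deriv phi x" if "x \<in> {a..b}" for x
    using assms that unfolding weak_second_deriv_def by (metis atLeastAtMost_iff diff_add_cancel add.commute)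
qed

lemma weak_second_deriv_diff_affine:
  assumes p: "weak_second_deriv p chi" and q: "weak_second_deriv q chi"
  shows "p x - q x = (deriv p 0 - deriv q 0) * x + (p 0 - q 0)"
proof -
  define c where "c = deriv p 0 - deriv q 0"
  have deriv_diff: "deriv p y - deriv q y = c" for y
  proof (cases "0 \<le> y")
    case True
    then have "deriv p y - deriv p 0 = integral {0..y} chi" "deriv q y - deriv q 0 = integral {0..y} chi"
      using p q by (simp_all add: weak_second_deriv_def)
    then show ?thesis
      by (simp add: c_def)
  next
    case False
    then have "deriv p 0 - deriv p y = integral {y..0} chi" "deriv q 0 - deriv q y = integral {y..0} chi"
      using p q by (simp_all add: weak_second_deriv_def)
    then show ?thesis
      by (simp add: c_def)
  qed
  have "\<forall>y. ((\<lambda>y. p y - q y - c * y) has_real_derivative 0) (at y)"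
    using has_real_derivative_weak_second_deriv[OF p] has_real_derivative_weak_second_deriv[OF q]
      deriv_diff
    by (auto intro!: derivative_eq_intros)
  then have "p x - q x - c * x = p 0 - q 0 - c * 0"
    by (rule DERIV_isconst_all)
  then show ?thesis
    by (simp add: c_def)
qed

lemma poisson_sol_unique:
  assumes p: "poisson_sol f p" and q: "poisson_sol f q"
  shows "p = q"
proof -
  have wp: "weak_second_deriv p (\<lambda>x. - f x)" and wq: "weak_second_deriv q (\<lambda>x. - f x)"
    using p q by (simp_all add: poisson_sol_def)
  note affine = weak_second_deriv_diff_affine[OF wp wq]
  define d where "d = p 0 - q 0"
  have "p 1 = p 0" "q 1 = q 0"
    using p q unfolding poisson_sol_def periodic1_def by (metis add_0)+
  then have "deriv p 0 - deriv q 0 = 0"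
    using affine[of 1] by simp
  then have diff_const: "p x - q x = d" for x
    using affine[of x] by (simp add: d_def)
  have cont: "continuous_on {0..1} p" "continuous_on {0..1} q"
    using has_real_derivative_weak_second_deriv[OF wp] has_real_derivative_weak_second_deriv[OF wq]
    by (meson DERIV_continuous continuous_at_imp_continuous_on)+
  have "d = integral {0..1} (\<lambda>x. p x - q x)"
    by (simp add: diff_const)
  also have "\<dots> = 0"
    using p q cont
    by (simp add: Henstock_Kurzweil_Integration.integral_diff integrable_continuous_real poisson_sol_def)
  finally show ?thesis
    using diff_const by fastforce
qed

lemma poisson_sol_The:
  assumes "periodic1 f" "f integrable_on {0..1}" "integral {0..1} f = 0"
  shows "poisson_sol f (THE phi. poisson_sol f phi)"
  using poisson_sol_exists[OF assms] poisson_sol_unique by (metis theI)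

lemma integral_square_nonneg: "0 \<le> integral S (\<lambda>x. (g x)\<^sup>2 :: real)"
  by (cases "(\<lambda>x. (g x)\<^sup>2) integrable_on S")
    (simp_all add: Henstock_Kurzweil_Integration.integral_nonneg not_integrable_integral)

lemma elliptic_const_deriv_estimate:
  assumes CR: "elliptic_const CR" and f: "periodic1 f" "f \<in> borel_measurable lborel"
    "f integrable_on {0..1}" "(\<lambda>x. (f x)\<^sup>2) integrable_on {0..1}" "integral {0..1} f = 0"
    and phi: "poisson_sol f phi"
  shows "integral {0..1} (\<lambda>x. (deriv phi x)\<^sup>2) \<le> CR\<^sup>2 * integral {0..1} (\<lambda>x. (f x)\<^sup>2)"
proof -
  define A where "A = integral {0..1} (\<lambda>x. (phi x)\<^sup>2)"
  define B where "B = integral {0..1} (\<lambda>x. (deriv phi x)\<^sup>2)"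
  define C where "C = integral {0..1} (\<lambda>x. (f x)\<^sup>2)"
  have nonneg: "0 \<le> A" "0 \<le> B" "0 \<le> C"
    unfolding A_def B_def C_def by (simp_all add: integral_square_nonneg)
  have "sqrt (A + B + C) \<le> CR * sqrt C"
    using CR f phi unfolding elliptic_const_def H2_norm_T_def L2_norm_T_def A_def B_def C_def
    by simp
  then have "(sqrt (A + B + C))\<^sup>2 \<le> (CR * sqrt C)\<^sup>2"
    using nonneg by (intro power_mono) simp_all
  then have "A + B + C \<le> CR\<^sup>2 * C"
    using nonneg by (simp add: power_mult_distrib)
  then show ?thesis
    using nonneg by (simp add: B_def C_def)
qed

section \<open>Essentially bounded functions on the unit interval\<close>

(* The L^infinity bounds hold only almost everywhere, so comparisons of integrals go through the
   Lebesgue integral on [0, 1]; the results are transferred back to the gauge integral of Defs. *)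
abbreviation unit_lebesgue :: "real measure" where
  "unit_lebesgue \<equiv> lebesgue_on {0..1}"

lemma borel_measurable_lebesgue_on_of_lborel:
  assumes "f \<in> borel_measurable lborel"
  shows "f \<in> borel_measurable (lebesgue_on S)"
proof -
  have "f \<in> borel \<rightarrow>\<^sub>M borel"
    using assms by (simp add: measurable_lborel2)
  from measurable_compose[OF id_borel_measurable_lebesgue_on this] show ?thesis
    by simp
qed

lemma integrable_unit_lebesgue_bounded:
  fixes f :: "real \<Rightarrow> real"
  assumes "f \<in> borel_measurable unit_lebesgue" "AE x in unit_lebesgue. \<bar>f x\<bar> \<le> B"
  shows "integrable unit_lebesgue f"
proof -
  have "finite_measure unit_lebesgue"
    by (rule finite_measure_lebesgue_on) simp
  then show ?thesis
    using finite_measure.integrable_const_bound[of unit_lebesgue f B] assms by simp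
qed

lemma integral_unit_lebesgue:
  fixes f :: "real \<Rightarrow> real"
  assumes "integrable unit_lebesgue f"
  shows "integral {0..1} f = integral\<^sup>L unit_lebesgue f"
  using has_integral_integral_lebesgue_on[OF assms] by (simp add: integral_unique)

lemma integrable_on_unit_lebesgue:
  fixes f :: "real \<Rightarrow> real"
  assumes "integrable unit_lebesgue f"
  shows "f integrable_on {0..1}"
  using integrable_on_lebesgue_on[OF assms] by simp

lemma integrable_on_unit_lebesgue_bounded_mult:
  fixes g h :: "real \<Rightarrow> real"
  assumes "g \<in> borel_measurable unit_lebesgue" "h \<in> borel_measurable unit_lebesgue"
    and "AE x in unit_lebesgue. \<bar>g x\<bar> \<le> A" "AE x in unit_lebesgue. \<bar>h x\<bar> \<le> B"
  shows "(\<lambda>x. g x * h x) integrable_on {0..1}"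
proof -
  have "AE x in unit_lebesgue. \<bar>g x * h x\<bar> \<le> A * B"
    using assms(3,4) by eventually_elim (auto simp: abs_mult intro: mult_mono)
  with assms(1,2) show ?thesis
    by (intro integrable_on_unit_lebesgue integrable_unit_lebesgue_bounded) auto
qed

lemma AE_le_Linf_norm_T:
  assumes "Linf_norm_T u \<le> ereal M"
  shows "AE x in unit_lebesgue. \<bar>u x\<bar> \<le> M"
  using esssup_AE[of "\<lambda>x. ereal \<bar>u x\<bar>" unit_lebesgue]
proof eventually_elim
  case (elim x)
  with assms show ?case
    unfolding Linf_norm_T_def by (metis ereal_less_eq(3) order_trans)
qed

section \<open>Two-sided bounds for the energy\<close>

lemma borel_measurable_ent [measurable]: "ent m \<in> borel_measurable borel"
  unfolding ent_def Let_def by measurable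

lemma integral_ent_bounds:
  fixes u :: "real \<Rightarrow> real"
  assumes meas [measurable]: "u \<in> borel_measurable unit_lebesgue" and nonneg: "\<And>x. 0 \<le> u x"
    and bound: "AE x in unit_lebesgue. u x \<le> M" and m: "0 < m" "m \<le> M"
  shows "(\<lambda>x. (u x - m)\<^sup>2) integrable_on {0..1}"
    and "integral {0..1} (\<lambda>x. (u x - m)\<^sup>2) / (2 * M) \<le> integral {0..1} (\<lambda>x. ent m (u x))"
    and "integral {0..1} (\<lambda>x. ent m (u x)) \<le> integral {0..1} (\<lambda>x. (u x - m)\<^sup>2) / m"
proof -
  have sq_le: "(u x - m)\<^sup>2 \<le> M\<^sup>2" if "u x \<le> M" for x
    using nonneg[of x] that m by (simp add: abs_le_square_iff[symmetric])
  have sq_int: "integrable unit_lebesgue (\<lambda>x. (u x - m)\<^sup>2)"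
    by (rule integrable_unit_lebesgue_bounded[where B = "M\<^sup>2"]) (use bound sq_le in \<open>auto elim!: eventually_mono\<close>)
  have ent_le: "\<bar>ent m (u x)\<bar> \<le> M\<^sup>2 / m" if "u x \<le> M" for x
  proof -
    have "ent m (u x) \<le> (u x - m)\<^sup>2 / m"
      by (rule ent_le_square[OF m(1) nonneg])
    also have "\<dots> \<le> M\<^sup>2 / m"
      using sq_le[OF that] m by (simp add: divide_right_mono)
    finally show ?thesis
      using ent_nonneg[OF m(1) nonneg] by simp
  qed
  have ent_int: "integrable unit_lebesgue (\<lambda>x. ent m (u x))"
    by (rule integrable_unit_lebesgue_bounded[where B = "M\<^sup>2 / m"]) (use bound ent_le in \<open>auto elim!: eventually_mono\<close>)
  show "(\<lambda>x. (u x - m)\<^sup>2) integrable_on {0..1}"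
    by (rule integrable_on_unit_lebesgue[OF sq_int])
  have "integral\<^sup>L unit_lebesgue (\<lambda>x. (u x - m)\<^sup>2 / (2 * M)) \<le> integral\<^sup>L unit_lebesgue (\<lambda>x. ent m (u x))"
    using bound by (intro integral_mono_AE ent_int) (auto elim!: eventually_mono intro: square_le_ent m nonneg sq_int)
  then show "integral {0..1} (\<lambda>x. (u x - m)\<^sup>2) / (2 * M) \<le> integral {0..1} (\<lambda>x. ent m (u x))"
    by (simp add: integral_unit_lebesgue sq_int ent_int)
  have "integral\<^sup>L unit_lebesgue (\<lambda>x. ent m (u x)) \<le> integral\<^sup>L unit_lebesgue (\<lambda>x. (u x - m)\<^sup>2 / m)"
    by (intro integral_mono ent_int) (auto intro: ent_le_square m nonneg sq_int)
  then show "integral {0..1} (\<lambda>x. ent m (u x)) \<le> integral {0..1} (\<lambda>x. (u x - m)\<^sup>2) / m"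
    by (simp add: integral_unit_lebesgue sq_int ent_int)
qed

lemma abs_mult_le_weighted_squares:
  fixes a b c :: real
  assumes "0 < c"
  shows "\<bar>a * b\<bar> \<le> c / 2 * a\<^sup>2 + b\<^sup>2 / (2 * c)"
proof -
  have "2 * (c * \<bar>a\<bar>) * \<bar>b\<bar> \<le> (c * \<bar>a\<bar>)\<^sup>2 + \<bar>b\<bar>\<^sup>2"
    by (rule sum_squares_bound)
  then show ?thesis
    using assms by (simp add: field_simps power2_eq_square abs_mult)
qed

definition sq_deviation :: "real \<Rightarrow> (real \<Rightarrow> real) \<Rightarrow> (real \<Rightarrow> real) \<Rightarrow> real" where
  "sq_deviation m u v = integral {0..1} (\<lambda>x. (u x - m)\<^sup>2 + (v x - m)\<^sup>2)"

context
  fixes u v :: "real \<Rightarrow> real" and m M :: real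
  assumes u: "Linf_nonneg u" "Linf_norm_T u \<le> ereal M"
    and v: "Linf_nonneg v" "Linf_norm_T v \<le> ereal M"
    and mean: "(1/2) * integral {0..1} (\<lambda>x. u x + v x) = m"
    and m_pos: "0 < m"
begin

lemma nonneg_u_v: "0 \<le> u x" "0 \<le> v x"
  using u v by (simp_all add: Linf_nonneg_def)

lemma borel_measurable_u_v [measurable]:
  "u \<in> borel_measurable unit_lebesgue" "v \<in> borel_measurable unit_lebesgue"
  using u v by (simp_all add: Linf_nonneg_def borel_measurable_lebesgue_on_of_lborel)

lemma AE_le_bound: "AE x in unit_lebesgue. u x \<le> M" "AE x in unit_lebesgue. v x \<le> M"
proof -
  show "AE x in unit_lebesgue. u x \<le> M"
    using AE_le_Linf_norm_T[OF u(2)] by eventually_elim (simp add: abs_le_iff)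
  show "AE x in unit_lebesgue. v x \<le> M"
    using AE_le_Linf_norm_T[OF v(2)] by eventually_elim (simp add: abs_le_iff)
qed

lemma integrable_unit_lebesgue_u_v: "integrable unit_lebesgue u" "integrable unit_lebesgue v"
proof -
  show "integrable unit_lebesgue u"
    using AE_le_bound(1) by (intro integrable_unit_lebesgue_bounded[where B = M])
      (auto simp: nonneg_u_v elim!: eventually_mono)
  show "integrable unit_lebesgue v"
    using AE_le_bound(2) by (intro integrable_unit_lebesgue_bounded[where B = M])
      (auto simp: nonneg_u_v elim!: eventually_mono)
qed

lemma mean_le_bound: "m \<le> M"
proof -
  have "2 * m = integral\<^sup>L unit_lebesgue (\<lambda>x. u x + v x)"
    using mean integrable_unit_lebesgue_u_v by (simp add: integral_unit_lebesgue)
  also have "\<dots> \<le> integral\<^sup>L unit_lebesgue (\<lambda>x. 2 * M)"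
  proof (rule integral_mono_AE)
    show "AE x in unit_lebesgue. u x + v x \<le> 2 * M"
      using AE_le_bound by eventually_elim simp
  qed (use integrable_unit_lebesgue_u_v in simp_all)
  also have "\<dots> = 2 * M"
    by (simp add: measure_restrict_space)
  finally show ?thesis by simp
qed

lemma H_T_bounds:
  shows "sq_deviation m u v / (2 * M) \<le> H_T m u v" and "H_T m u v \<le> sq_deviation m u v / m"
proof -
  note bounds_u = integral_ent_bounds[OF borel_measurable_u_v(1) nonneg_u_v(1) AE_le_bound(1) m_pos mean_le_bound]
   and bounds_v = integral_ent_bounds[OF borel_measurable_u_v(2) nonneg_u_v(2) AE_le_bound(2) m_pos mean_le_bound]
  have "sq_deviation m u v = integral {0..1} (\<lambda>x. (u x - m)\<^sup>2) + integral {0..1} (\<lambda>x. (v x - m)\<^sup>2)"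
    unfolding sq_deviation_def by (rule Henstock_Kurzweil_Integration.integral_add[OF bounds_u(1) bounds_v(1)])
  then show "sq_deviation m u v / (2 * M) \<le> H_T m u v" and "H_T m u v \<le> sq_deviation m u v / m"
    using bounds_u(2,3) bounds_v(2,3) by (simp_all add: H_T_def add_divide_distrib)
qed

lemma AE_abs_le_bound:
  "AE x in unit_lebesgue. \<bar>u x + v x - 2 * m\<bar> \<le> 2 * M" "AE x in unit_lebesgue. \<bar>u x - v x\<bar> \<le> M"
proof -
  have "AE x in unit_lebesgue. \<bar>u x + v x - 2 * m\<bar> \<le> 2 * M \<and> \<bar>u x - v x\<bar> \<le> M"
    using AE_le_bound
  proof eventually_elim
    case (elim x)
    with nonneg_u_v[of x] mean_le_bound m_pos show ?case
      by (auto simp: abs_le_iff)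
  qed
  then show "AE x in unit_lebesgue. \<bar>u x + v x - 2 * m\<bar> \<le> 2 * M" "AE x in unit_lebesgue. \<bar>u x - v x\<bar> \<le> M"
    by simp_all
qed

lemma poisson_datum:
  shows "periodic1 (\<lambda>x. u x + v x - 2 * m)" and "(\<lambda>x. u x + v x - 2 * m) \<in> borel_measurable lborel"
    and "(\<lambda>x. u x + v x - 2 * m) integrable_on {0..1}"
    and "(\<lambda>x. (u x + v x - 2 * m)\<^sup>2) integrable_on {0..1}"
    and "integral {0..1} (\<lambda>x. u x + v x - 2 * m) = 0"
proof -
  show "periodic1 (\<lambda>x. u x + v x - 2 * m)"
    using u(1) v(1) by (simp add: Linf_nonneg_def periodic1_def)
  show "(\<lambda>x. u x + v x - 2 * m) \<in> borel_measurable lborel"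
    using u(1) v(1) unfolding Linf_nonneg_def by (intro borel_measurable_diff borel_measurable_add) auto
  have "integrable unit_lebesgue (\<lambda>x. u x + v x - 2 * m)"
    by (rule integrable_unit_lebesgue_bounded[OF _ AE_abs_le_bound(1)]) measurable
  then show "(\<lambda>x. u x + v x - 2 * m) integrable_on {0..1}"
    by (rule integrable_on_unit_lebesgue)
  show "(\<lambda>x. (u x + v x - 2 * m)\<^sup>2) integrable_on {0..1}"
    unfolding power2_eq_square
    by (rule integrable_on_unit_lebesgue_bounded_mult[OF _ _ AE_abs_le_bound(1) AE_abs_le_bound(1)]) measurable
  have "(\<lambda>x. u x + v x) integrable_on {0..1}"
    using integrable_unit_lebesgue_u_v by (intro integrable_on_unit_lebesgue) simp
  then show "integral {0..1} (\<lambda>x. u x + v x - 2 * m) = 0"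
    using Henstock_Kurzweil_Integration.integral_diff[OF _ integrable_const_ivl, of "\<lambda>x. u x + v x" 0 1 "2 * m"]
      mean by simp
qed

lemma poisson_sol_pot: "poisson_sol (\<lambda>x. u x + v x - 2 * m) (pot m u v)"
  unfolding pot_def using poisson_datum(1,3,5) by (rule poisson_sol_The)

lemma deriv_pot_estimate:
  assumes "elliptic_const CR"
  shows "integral {0..1} (\<lambda>x. (deriv (pot m u v) x)\<^sup>2) \<le> CR\<^sup>2 * integral {0..1} (\<lambda>x. (u x + v x - 2 * m)\<^sup>2)"
  using elliptic_const_deriv_estimate[OF assms poisson_datum poisson_sol_pot] .

lemma deriv_pot_bounded:
  obtains B where "deriv (pot m u v) \<in> borel_measurable unit_lebesgue"
    and "AE x in unit_lebesgue. \<bar>deriv (pot m u v) x\<bar> \<le> B"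
proof -
  have cont: "continuous_on {0..1} (deriv (pot m u v))"
    using poisson_sol_pot unfolding poisson_sol_def by (blast intro: continuous_on_deriv_weak_second_deriv)
  obtain B where "\<And>x. x \<in> {0..1} \<Longrightarrow> \<bar>deriv (pot m u v) x\<bar> \<le> B"
    using continuous_on_compact_bound[OF compact_Icc cont] by auto
  then have "AE x in unit_lebesgue. \<bar>deriv (pot m u v) x\<bar> \<le> B"
    by (intro AE_I2) simp
  moreover have "deriv (pot m u v) \<in> borel_measurable unit_lebesgue"
    by (rule continuous_imp_measurable_on_sets_lebesgue[OF cont]) simp
  ultimately show ?thesis
    using that by blast
qed

lemma cross_term_bound:
  assumes CR: "elliptic_const CR"
  shows "\<bar>integral {0..1} (\<lambda>x. (u x - v x) * deriv (pot m u v) x)\<bar> \<le> CR * sq_deviation m u v"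
proof -
  have CR_pos: "0 < CR"
    using CR by (simp add: elliptic_const_def)
  define j where "j x = u x - v x" for x
  define f where "f x = u x + v x - 2 * m" for x
  define P where "P = deriv (pot m u v)"
  obtain BP where P_meas [measurable]: "P \<in> borel_measurable unit_lebesgue"
    and P_bound: "AE x in unit_lebesgue. \<bar>P x\<bar> \<le> BP"
    unfolding P_def by (rule deriv_pot_bounded)
  have j_meas [measurable]: "j \<in> borel_measurable unit_lebesgue"
    unfolding j_def by measurable
  have j_bound: "AE x in unit_lebesgue. \<bar>j x\<bar> \<le> M"
    unfolding j_def by (rule AE_abs_le_bound(2))
  have ints: "(\<lambda>x. (j x)\<^sup>2) integrable_on {0..1}" "(\<lambda>x. (P x)\<^sup>2) integrable_on {0..1}"
      "(\<lambda>x. j x * P x) integrable_on {0..1}" "(\<lambda>x. (f x)\<^sup>2) integrable_on {0..1}"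
    using integrable_on_unit_lebesgue_bounded_mult[OF j_meas j_meas j_bound j_bound]
      integrable_on_unit_lebesgue_bounded_mult[OF P_meas P_meas P_bound P_bound]
      integrable_on_unit_lebesgue_bounded_mult[OF j_meas P_meas j_bound P_bound]
      poisson_datum(4)
    by (simp_all add: power2_eq_square f_def)
  have weighted_int: "(\<lambda>x. CR / 2 * (j x)\<^sup>2 + (P x)\<^sup>2 / (2 * CR)) integrable_on {0..1}"
    by (intro integrable_add integrable_on_mult_right integrable_on_divide ints(1,2))
  have "\<bar>integral {0..1} (\<lambda>x. j x * P x)\<bar> \<le> integral {0..1} (\<lambda>x. CR / 2 * (j x)\<^sup>2 + (P x)\<^sup>2 / (2 * CR))"
    using integral_norm_bound_integral[OF ints(3) weighted_int] abs_mult_le_weighted_squares[OF CR_pos]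
    by simp
  also have "\<dots> = CR / 2 * integral {0..1} (\<lambda>x. (j x)\<^sup>2) + integral {0..1} (\<lambda>x. (P x)\<^sup>2) / (2 * CR)"
    using ints by (simp add: Henstock_Kurzweil_Integration.integral_add integrable_on_mult_right integrable_on_divide)
  also have "\<dots> \<le> CR / 2 * integral {0..1} (\<lambda>x. (j x)\<^sup>2) + CR / 2 * integral {0..1} (\<lambda>x. (f x)\<^sup>2)"
    using deriv_pot_estimate[OF CR] CR_pos by (simp add: P_def f_def field_simps power2_eq_square)
  also have "\<dots> = CR / 2 * integral {0..1} (\<lambda>x. (j x)\<^sup>2 + (f x)\<^sup>2)"
    using ints by (simp add: Henstock_Kurzweil_Integration.integral_add algebra_simps)
  also have "integral {0..1} (\<lambda>x. (j x)\<^sup>2 + (f x)\<^sup>2) = integral {0..1} (\<lambda>x. 2 * ((u x - m)\<^sup>2 + (v x - m)\<^sup>2))"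
    by (rule integral_cong) (simp add: j_def f_def power2_eq_square algebra_simps)
  also have "\<dots> = 2 * sq_deviation m u v"
    unfolding sq_deviation_def by (rule Henstock_Kurzweil_Integration.integral_mult_right)
  finally show ?thesis
    by (simp add: j_def P_def)
qed

lemma E_T_bounds:
  assumes "elliptic_const CR" "0 \<le> eps"
  shows "(1 / (2 * M) - eps * CR) * sq_deviation m u v \<le> E_T eps m u v"
    and "E_T eps m u v \<le> (1 / m + eps * CR) * sq_deviation m u v"
proof -
  let ?X = "integral {0..1} (\<lambda>x. (u x - v x) * deriv (pot m u v) x)"
  have "\<bar>eps * ?X\<bar> \<le> eps * (CR * sq_deviation m u v)"
    using cross_term_bound[OF assms(1)] assms(2) by (simp add: abs_mult mult_left_mono)
  then show "(1 / (2 * M) - eps * CR) * sq_deviation m u v \<le> E_T eps m u v"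
    and "E_T eps m u v \<le> (1 / m + eps * CR) * sq_deviation m u v"
    using H_T_bounds unfolding E_T_def by (simp_all add: algebra_simps abs_le_iff)
qed

end

theorem lemma3p3:
  fixes CR :: real
  assumes "elliptic_const CR"
  shows "\<forall>M::real. \<forall>m::real. \<forall>eps::real.
     M > 0 \<and> m > 0 \<and> 0 < eps \<and> eps < 1 / (4 * M * CR) \<longrightarrow>
     (\<exists>C1 C2 :: real. C1 > 0 \<and> C2 > 0 \<and>
        (\<forall>u v. Linf_nonneg u \<and> Linf_nonneg v \<and>
            max (Linf_norm_T u) (Linf_norm_T v) = ereal M \<and>
            (1/2) * integral {0..1} (\<lambda>x. u x + v x) = m \<longrightarrow>
            (1 / C2) * integral {0..1} (\<lambda>x. (u x - m)\<^sup>2 + (v x - m)\<^sup>2) \<le> E_T eps m u v \<and>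
            E_T eps m u v \<le> (1 / C1) * integral {0..1} (\<lambda>x. (u x - m)\<^sup>2 + (v x - m)\<^sup>2)))"
proof (intro allI impI)
  fix M m eps :: real
  assume "M > 0 \<and> m > 0 \<and> 0 < eps \<and> eps < 1 / (4 * M * CR)"
  then have M: "0 < M" and m: "0 < m" and eps: "0 < eps" "eps < 1 / (4 * M * CR)"
    by auto
  have "0 < CR"
    using assms by (simp add: elliptic_const_def)
  with M m eps have factors_pos: "0 < 1 / (2 * M) - eps * CR" "0 < 1 / m + eps * CR"
    by (simp_all add: field_simps add_pos_pos)
  show "\<exists>C1 C2. C1 > 0 \<and> C2 > 0 \<and> (\<forall>u v. Linf_nonneg u \<and> Linf_nonneg v \<and>
            max (Linf_norm_T u) (Linf_norm_T v) = ereal M \<and>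
            (1/2) * integral {0..1} (\<lambda>x. u x + v x) = m \<longrightarrow>
            (1 / C2) * integral {0..1} (\<lambda>x. (u x - m)\<^sup>2 + (v x - m)\<^sup>2) \<le> E_T eps m u v \<and>
            E_T eps m u v \<le> (1 / C1) * integral {0..1} (\<lambda>x. (u x - m)\<^sup>2 + (v x - m)\<^sup>2))"
  proof (rule exI[of _ "1 / (1 / m + eps * CR)"], rule exI[of _ "1 / (1 / (2 * M) - eps * CR)"],
      intro conjI allI impI)
    fix u v
    assume "Linf_nonneg u \<and> Linf_nonneg v \<and> max (Linf_norm_T u) (Linf_norm_T v) = ereal M \<and>
      (1/2) * integral {0..1} (\<lambda>x. u x + v x) = m"
    then have "Linf_nonneg u" "Linf_norm_T u \<le> ereal M" "Linf_nonneg v" "Linf_norm_T v \<le> ereal M"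
        "(1/2) * integral {0..1} (\<lambda>x. u x + v x) = m"
      by (auto simp: max_def split: if_splits)
    from E_T_bounds[OF this m assms less_imp_le[OF eps(1)]]
    show "1 / (1 / (1 / (2 * M) - eps * CR)) * integral {0..1} (\<lambda>x. (u x - m)\<^sup>2 + (v x - m)\<^sup>2)
        \<le> E_T eps m u v"
      and "E_T eps m u v \<le> 1 / (1 / (1 / m + eps * CR)) * integral {0..1} (\<lambda>x. (u x - m)\<^sup>2 + (v x - m)\<^sup>2)"
      by (simp_all add: sq_deviation_def)
  qed (use factors_pos in simp_all)
qed

end
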